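(* Let $p$ be an odd prime and $h$ a homeomorphism of the Kirch space $(\mathbb{N},\tau_K)$. (1) If $p$ is a Fermat prime or a Mersenne prime, then $h(p)=p$. (2) If $p$ is neither a Fermat prime nor a Mersenne prime, then $h[p^{\mathbb{N}}]=p^{\mathbb{N}}$, where $p^{\mathbb{N}}=\{p^n:n\in\mathbb{N}\}$.
   Context: $\mathbb{N}=\{1,2,\dots\}$, $\mathbb{N}_0=\{0\}\cup\mathbb{N}$. The Kirch topology $\tau_K$ on $\mathbb{N}$ is generated by the base of all $a+b\mathbb{N}_0=\{a+bn:n\in\mathbb{N}_0\}$ with $a,b\in\mathbb{N}$ coprime and $b$ square-free. A prime $p$ is a Fermat prime if $p=2^n+1$ for some $n\in\mathbb{N}$ and a Mersenne prime if $p=2^n-1$ for some $n\in\mathbb{N}$. $h[A]=\{h(a):a\in A\}$. *)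

theory Defs
  imports "HOL-Analysis.Analysis" "HOL-Computational_Algebra.Squarefree"
begin

definition arith_prog :: "nat \<Rightarrow> nat \<Rightarrow> nat set" where
  "arith_prog a b = {a + b * n | n. True}"

definition kirch_base :: "nat set set" where
  "kirch_base = {arith_prog a b | a b. a \<ge> 1 \<and> b \<ge> 1 \<and> coprime a b \<and> squarefree b}"

text \<open>The Kirch topology; its carrier is {1,2,...} (the union of the base).\<close>
definition kirch_topology :: "nat topology" where
  "kirch_topology = topology_generated_by kirch_base"

definition fermat_prime :: "nat \<Rightarrow> bool" where
  "fermat_prime p \<longleftrightarrow> prime p \<and> (\<exists>n\<ge>1. p = 2 ^ n + 1)"

definition mersenne_prime :: "nat \<Rightarrow> bool" where
  "mersenne_prime p \<longleftrightarrow> prime p \<and> (\<exists>n\<ge>1. p = 2 ^ n - 1)"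

end

theory Submission
  imports Defs
begin

text \<open>A homeomorphism \<open>h\<close> of the Kirch space preserves topological notions, and several of
  them encode arithmetic. Basic open sets are superconnected, and a family of disjoint nonempty
  superconnected open sets whose common boundary is everything outside them lies in pairwise
  distinct nonzero residue classes modulo a single prime. Applied to the images of the classes
  \<open>j + q\<nat>\<^sub>0\<close>, \<open>0 < j < q\<close>, of an odd prime \<open>q\<close>, this shows that \<open>h\<close> permutes these classes, so
  \<open>h\<close> preserves divisibility by \<open>q\<close> and congruence modulo \<open>q\<close>. The same holds for \<open>q = 2\<close>,
  because the even numbers are exactly the points at which the space is semiregular. Hence \<open>h\<close>
  maps powers of \<open>p\<close> to powers of \<open>p\<close> and numbers at distance 1 to numbers at distance 1. If
  \<open>p = 2\<^sup>n \<plusminus> 1\<close>, then \<open>h p = p\<^sup>m\<close> and \<open>h (2\<^sup>n) = 2\<^sup>k\<close> with \<open>\<bar>p\<^sup>m - 2\<^sup>k\<bar> = 1\<close>, which forces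
  \<open>m = 1\<close> except for \<open>3\<^sup>2 = 2\<^sup>3 + 1\<close>; in that case \<open>h 2 = h 4 = 8\<close>, contradicting injectivity.\<close>

abbreviation KT :: "nat topology" where "KT \<equiv> kirch_topology"

section \<open>Arithmetic progressions and squarefree moduli\<close>

lemma squarefree_dvdI:
  fixes b n :: nat
  assumes "squarefree b" and "\<And>p. prime p \<Longrightarrow> p dvd b \<Longrightarrow> p dvd n"
  shows "b dvd n"
proof -
  obtain c where c: "b = gcd b n * c" by (metis dvd_def gcd_dvd1)
  have "c = 1"
  proof (rule ccontr)
    assume "c \<noteq> 1"
    then obtain p where p: "prime p" "p dvd c" using prime_factor_nat by blast
    then have "p dvd gcd b n" using assms(2) c by (metis dvd_mult gcd_greatest_iff)
    then have "p ^ 2 dvd b" using c p(2) by (metis mult_dvd_mono power2_eq_square)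
    then have "p dvd 1" by (rule squarefreeD[OF assms(1)])
    then show False using p(1) by simp
  qed
  then show ?thesis using c by (metis gcd_dvd2 mult.right_neutral)
qed

lemma mod_eq_squarefreeI:
  fixes b x y :: nat
  assumes "squarefree b" and "\<And>p. prime p \<Longrightarrow> p dvd b \<Longrightarrow> x mod p = y mod p"
  shows "x mod b = y mod b"
proof -
  have "x mod b = y mod b"
    if "y \<le> x" "\<And>p. prime p \<Longrightarrow> p dvd b \<Longrightarrow> x mod p = y mod p" for x y :: nat
    using that squarefree_dvdI[OF assms(1), of "x - y"] by (simp add: mod_eq_dvd_iff_nat)
  then show ?thesis using assms(2) by (metis nat_le_linear)
qed

lemma finite_prime_divisors: "n > 0 \<Longrightarrow> finite {p::nat. prime p \<and> p dvd n}"
  by (rule finite_subset[OF _ finite_divisors_nat[of n]]) auto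

lemma primes_chinese_remainder:
  fixes P :: "nat set" and r :: "nat \<Rightarrow> nat"
  assumes "finite P" and "\<And>p. p \<in> P \<Longrightarrow> prime p"
  shows "\<exists>x\<ge>B. \<forall>p\<in>P. x mod p = r p mod p"
  using assms
proof (induction P rule: finite_induct)
  case empty
  then show ?case by blast
next
  case (insert q P)
  then obtain z where z: "z \<ge> B" "\<forall>p\<in>P. z mod p = r p mod p" by auto
  define M where "M = \<Prod>P"
  have "coprime M q"
    unfolding M_def using insert by (auto intro!: prod_coprime_left primes_coprime)
  moreover have "M > 0" unfolding M_def by (rule prod_pos) (simp add: insert.prems prime_gt_0_nat)
  moreover have "q > 0" by (simp add: insert.prems prime_gt_0_nat)
  ultimately obtain x k l where x: "x = z + k * M" "x = r q + l * q"
    using chinese_remainder by blast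
  have "\<forall>p\<in>P. x mod p = r p mod p"
  proof
    fix p assume "p \<in> P"
    have "p dvd M" unfolding M_def using insert(1) \<open>p \<in> P\<close> by (rule dvd_prodI)
    then obtain c where "M = p * c" ..
    then have "x = z + p * (k * c)" using x(1) by simp
    then show "x mod p = r p mod p" using z(2) \<open>p \<in> P\<close> by simp
  qed
  moreover have "x mod q = r q mod q" using x(2) by simp
  moreover have "x \<ge> B" using x(1) z(1) by simp
  ultimately show ?case by auto
qed

lemma arith_prog_iff: "x \<in> arith_prog a b \<longleftrightarrow> a \<le> x \<and> x mod b = a mod b"
proof
  assume "x \<in> arith_prog a b"
  then show "a \<le> x \<and> x mod b = a mod b" by (auto simp: arith_prog_def)
next
  assume x: "a \<le> x \<and> x mod b = a mod b"
  then obtain n where "x - a = b * n" by (metis dvdE mod_eq_dvd_iff_nat)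
  then have "x = a + b * n" using x by (metis le_add_diff_inverse)
  then show "x \<in> arith_prog a b" by (auto simp: arith_prog_def)
qed

lemma arith_prog_start [simp]: "a \<in> arith_prog a b"
  by (simp add: arith_prog_iff)

lemma arith_prog_ge: "x \<in> arith_prog a b \<Longrightarrow> a \<le> x"
  by (simp add: arith_prog_iff)

lemma arith_prog_mod: "x \<in> arith_prog a b \<Longrightarrow> p dvd b \<Longrightarrow> x mod p = a mod p"
  by (metis arith_prog_iff mod_mod_cancel)

lemma arith_prog_subset:
  assumes "b dvd e" and "x \<in> arith_prog a b"
  shows "arith_prog x e \<subseteq> arith_prog a b"
proof
  fix y assume "y \<in> arith_prog x e"
  then have "x \<le> y" "y mod b = x mod b"
    using assms(1) by (auto simp: arith_prog_iff intro: arith_prog_mod)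
  then show "y \<in> arith_prog a b" using assms(2) by (auto simp: arith_prog_iff)
qed

lemma arith_prog_residue_iff: "j < q \<Longrightarrow> x \<in> arith_prog j q \<longleftrightarrow> x mod q = j"
  by (auto simp: arith_prog_iff intro: order_trans[OF _ mod_less_eq_dividend])

lemma arith_prog_meets_residue:
  assumes "b > 0" "m > 0" "coprime b m"
  obtains v where "v \<in> arith_prog a b" "v mod m = t mod m"
proof -
  obtain v k l where v: "v = a + k * b" "v = t + l * m"
    using chinese_remainder[OF assms(3)] assms(1,2) by blast
  have "v \<in> arith_prog a b" using v(1) by (auto simp: arith_prog_def mult.commute)
  moreover have "v mod m = t mod m" using v(2) by simp
  ultimately show ?thesis by (rule that)
qed

lemma prime_dvd_prod_primes:
  fixes Q :: "nat set"
  assumes "finite Q" "\<And>s. s \<in> Q \<Longrightarrow> prime s" "prime p" "p dvd \<Prod>Q"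
  shows "p \<in> Q"
  using assms prime_dvd_prod_iff[OF assms(1) assms(3), of id] primes_dvd_imp_eq by auto

lemma arith_prog_Int_nonempty:
  assumes "squarefree b" "squarefree e"
    and "\<And>p. prime p \<Longrightarrow> p dvd b \<Longrightarrow> p dvd e \<Longrightarrow> a mod p = c mod p"
  shows "arith_prog a b \<inter> arith_prog c e \<noteq> {}"
proof -
  define P where "P = {p. prime p \<and> p dvd b * e}"
  have "b * e > 0" using assms(1,2) by (metis mult_is_0 not_squarefree_0 gr0I)
  then have "finite P" unfolding P_def by (rule finite_prime_divisors)
  then obtain z where z: "z \<ge> a + c" "\<forall>p\<in>P. z mod p = (if p dvd b then a else c) mod p"
    using primes_chinese_remainder[of P "a + c" "\<lambda>p. if p dvd b then a else c"]
    unfolding P_def by blast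
  have "z mod b = a mod b"
  proof (rule mod_eq_squarefreeI[OF assms(1)])
    fix p assume "prime p" "p dvd b"
    then show "z mod p = a mod p" using z(2) by (simp add: P_def)
  qed
  moreover have "z mod e = c mod e"
  proof (rule mod_eq_squarefreeI[OF assms(2)])
    fix p assume "prime p" "p dvd e"
    then show "z mod p = c mod p" using z(2) assms(3) by (simp add: P_def split: if_splits)
  qed
  ultimately have "z \<in> arith_prog a b \<inter> arith_prog c e" using z(1) by (simp add: arith_prog_iff)
  then show ?thesis by blast
qed

section \<open>Basic open sets and closures in the Kirch topology\<close>

definition kirch_basic :: "nat \<Rightarrow> nat \<Rightarrow> bool" where
  "kirch_basic a b \<longleftrightarrow> a \<ge> 1 \<and> b \<ge> 1 \<and> coprime a b \<and> squarefree b"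

lemma kirch_basic_pos: "kirch_basic a b \<Longrightarrow> b > 0"
  by (simp add: kirch_basic_def)

lemma kirch_basic_arith_prog:
  assumes "kirch_basic a b" "x \<in> arith_prog a b"
  shows "kirch_basic x b"
proof -
  have "gcd x b = gcd a b" using assms(2) by (metis arith_prog_iff gcd_red_nat)
  then show ?thesis using assms arith_prog_ge[OF assms(2)]
    by (auto simp: kirch_basic_def coprime_iff_gcd_eq_1)
qed

lemma kirch_basic_prime: "prime p \<Longrightarrow> \<not> p dvd x \<Longrightarrow> x \<ge> 1 \<Longrightarrow> kirch_basic x p"
  by (auto simp: kirch_basic_def prime_gt_0_nat Suc_le_eq coprime_commute prime_imp_coprime
      intro: squarefree_prime)

lemma kirch_basic_not_dvd: "kirch_basic x e \<Longrightarrow> prime s \<Longrightarrow> s dvd e \<Longrightarrow> \<not> s dvd x"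
  by (metis coprime_common_divisor kirch_basic_def not_prime_unit)

lemma kirch_basic_lcm:
  assumes "kirch_basic x e1" "kirch_basic x e2"
  shows "kirch_basic x (lcm e1 e2)"
proof -
  have "e1 \<noteq> 0" "e2 \<noteq> 0" using assms by (auto simp: kirch_basic_def)
  then have "squarefree (lcm e1 e2)"
    using assms by (auto simp: kirch_basic_def squarefree_factorial_semiring'' lcm_eq_0_iff
        multiplicity_lcm)
  moreover have "coprime x (lcm e1 e2)"
  proof -
    have "coprime x (e1 * e2)" using assms by (simp add: kirch_basic_def)
    moreover have "lcm e1 e2 dvd e1 * e2" by (simp add: lcm_least)
    ultimately show ?thesis by (meson coprime_divisors dvd_refl)
  qed
  ultimately show ?thesis
    using assms by (auto simp: kirch_basic_def lcm_pos_nat Suc_le_eq)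
qed

lemma kirch_basic_meets_residue:
  assumes "kirch_basic a b" "prime p" "\<not> p dvd b"
  obtains v where "v \<in> arith_prog a b" "v mod p = t mod p"
proof -
  have "coprime p b" using assms(2,3) by (rule prime_imp_coprime)
  then have "coprime b p" by (simp only: coprime_commute)
  then show ?thesis
    using arith_prog_meets_residue[OF kirch_basic_pos[OF assms(1)] prime_gt_0_nat[OF assms(2)]] that
    by blast
qed

lemma kirch_basic_prod_primes:
  fixes Q :: "nat set"
  assumes "finite Q" "\<And>s. s \<in> Q \<Longrightarrow> prime s \<and> \<not> s dvd x" "x \<ge> 1"
  shows "kirch_basic x (\<Prod>Q)"
proof -
  have "\<Prod>Q > 0" using assms(2) by (simp add: prime_gt_0_nat prod_pos)
  moreover have "squarefree (\<Prod>Q)"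
    using assms(2) squarefree_prod_coprime[of Q id]
    by (simp add: squarefree_prime primes_coprime)
  moreover have "coprime x (\<Prod>Q)"
    using assms(2) by (auto intro!: prod_coprime_right simp: coprime_commute prime_imp_coprime)
  ultimately show ?thesis using assms(3) by (simp add: kirch_basic_def Suc_le_eq)
qed

lemma arith_prog_refine:
  assumes "kirch_basic z e" "finite Q" "\<forall>s\<in>Q. prime s \<and> \<not> s dvd u"
    and "\<forall>s\<in>Q. s dvd e \<longrightarrow> z mod s = u mod s"
  obtains z' e' where "kirch_basic z' e'" "arith_prog z' e' \<subseteq> arith_prog z e"
    "\<forall>s\<in>Q. s dvd e' \<and> z' mod s = u mod s"
proof -
  have sq: "squarefree e" "squarefree (\<Prod>Q)"
    using assms(1) kirch_basic_prod_primes[of Q 1] assms(2,3) by (auto simp: kirch_basic_def)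
  have "arith_prog z e \<inter> arith_prog u (\<Prod>Q) \<noteq> {}"
  proof (rule arith_prog_Int_nonempty[OF sq])
    fix p assume "prime p" "p dvd e" "p dvd \<Prod>Q"
    then show "z mod p = u mod p" using assms(2-4) prime_dvd_prod_primes by blast
  qed
  then obtain z' where z': "z' \<in> arith_prog z e" "z' \<in> arith_prog u (\<Prod>Q)" by blast
  have zQ: "\<forall>s\<in>Q. s dvd \<Prod>Q \<and> z' mod s = u mod s"
  proof
    fix s assume "s \<in> Q"
    then have "s dvd \<Prod>Q" using dvd_prodI[OF assms(2), of s "\<lambda>x. x"] by simp
    then show "s dvd \<Prod>Q \<and> z' mod s = u mod s" using arith_prog_mod[OF z'(2)] by blast
  qed
  have "kirch_basic z' e" using kirch_basic_arith_prog[OF assms(1) z'(1)] .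
  moreover have "kirch_basic z' (\<Prod>Q)"
  proof (rule kirch_basic_prod_primes[OF assms(2)])
    show "z' \<ge> 1" using \<open>kirch_basic z' e\<close> by (simp add: kirch_basic_def)
    fix s assume "s \<in> Q"
    then show "prime s \<and> \<not> s dvd z'" using assms(3) zQ by (metis dvd_eq_mod_eq_0)
  qed
  ultimately have "kirch_basic z' (lcm e (\<Prod>Q))" by (rule kirch_basic_lcm)
  moreover have "arith_prog z' (lcm e (\<Prod>Q)) \<subseteq> arith_prog z e"
    using arith_prog_subset[OF _ z'(1)] by simp
  moreover have "\<forall>s\<in>Q. s dvd lcm e (\<Prod>Q) \<and> z' mod s = u mod s"
    using zQ by (meson dvd_lcm2 dvd_trans)
  ultimately show ?thesis by (rule that)
qed

lemma topspace_kirch: "topspace KT = {1..}"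
proof -
  have "\<Union>kirch_base = {1..}"
  proof
    show "\<Union>kirch_base \<subseteq> {1..}"
      by (auto simp: kirch_base_def dest!: arith_prog_ge)
    show "{1..} \<subseteq> \<Union>kirch_base"
    proof
      fix x :: nat assume "x \<in> {1..}"
      then have "arith_prog x 1 \<in> kirch_base"
        unfolding kirch_base_def by (intro CollectI exI[of _ x] exI[of _ "1::nat"]) simp
      then show "x \<in> \<Union>kirch_base" using arith_prog_start by blast
    qed
  qed
  then show ?thesis by (simp add: kirch_topology_def)
qed

lemma openin_kirch_arith_prog: "kirch_basic a b \<Longrightarrow> openin KT (arith_prog a b)"
  unfolding kirch_topology_def
  by (rule topology_generated_by_Basis) (auto simp: kirch_base_def kirch_basic_def)

lemma generate_kirch_basic_nbhd:
  assumes "generate_topology_on kirch_base U" and "x \<in> U"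
  shows "\<exists>e. kirch_basic x e \<and> arith_prog x e \<subseteq> U"
  using assms
proof (induction arbitrary: x rule: generate_topology_on.induct)
  case Empty
  then show ?case by simp
next
  case (Int U V)
  then obtain e1 e2 where "kirch_basic x e1" "arith_prog x e1 \<subseteq> U"
    "kirch_basic x e2" "arith_prog x e2 \<subseteq> V" by blast
  moreover have "arith_prog x (lcm e1 e2) \<subseteq> arith_prog x e1 \<inter> arith_prog x e2"
    using arith_prog_subset[OF _ arith_prog_start] by simp
  ultimately show ?case using kirch_basic_lcm by blast
next
  case (UN K)
  then show ?case by blast
next
  case (Basis s)
  then obtain a b where s: "s = arith_prog a b" "kirch_basic a b"
    unfolding kirch_base_def kirch_basic_def by blast
  then show ?case
    using Basis.prems kirch_basic_arith_prog arith_prog_subset[OF dvd_refl] by blast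
qed

lemma openin_kirch_iff:
  "openin KT U \<longleftrightarrow> U \<subseteq> {1..} \<and> (\<forall>x\<in>U. \<exists>e. kirch_basic x e \<and> arith_prog x e \<subseteq> U)"
proof
  assume U: "openin KT U"
  then have "U \<subseteq> {1..}" using openin_subset topspace_kirch by metis
  moreover have "generate_topology_on kirch_base U"
    using U unfolding kirch_topology_def by (rule openin_topology_generated_by)
  ultimately show "U \<subseteq> {1..} \<and> (\<forall>x\<in>U. \<exists>e. kirch_basic x e \<and> arith_prog x e \<subseteq> U)"
    using generate_kirch_basic_nbhd by blast
next
  assume "U \<subseteq> {1..} \<and> (\<forall>x\<in>U. \<exists>e. kirch_basic x e \<and> arith_prog x e \<subseteq> U)"
  then have "\<forall>x\<in>U. \<exists>T. openin KT T \<and> x \<in> T \<and> T \<subseteq> U"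
    using openin_kirch_arith_prog arith_prog_start by blast
  then show "openin KT U" by (rule openin_subopen[THEN iffD2])
qed

lemma openin_kirchE:
  assumes "openin KT U" "x \<in> U"
  obtains e where "kirch_basic x e" "arith_prog x e \<subseteq> U"
  using assms openin_kirch_iff by blast

lemma openin_kirch_subset: "openin KT U \<Longrightarrow> U \<subseteq> {1..}"
  by (simp add: openin_kirch_iff)

lemma arith_prog_subset_topspace_kirch: "kirch_basic a b \<Longrightarrow> arith_prog a b \<subseteq> topspace KT"
  using openin_kirch_subset[OF openin_kirch_arith_prog] by (simp add: topspace_kirch)

lemma in_closure_kirch_iff:
  "x \<in> KT closure_of S \<longleftrightarrow> 1 \<le> x \<and> (\<forall>e. kirch_basic x e \<longrightarrow> arith_prog x e \<inter> S \<noteq> {})"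
proof
  assume x: "x \<in> KT closure_of S"
  then have "1 \<le> x" using closure_of_subset_topspace topspace_kirch by fastforce
  moreover have "arith_prog x e \<inter> S \<noteq> {}" if "kirch_basic x e" for e
    using x openin_kirch_arith_prog[OF that] arith_prog_start unfolding in_closure_of by blast
  ultimately show "1 \<le> x \<and> (\<forall>e. kirch_basic x e \<longrightarrow> arith_prog x e \<inter> S \<noteq> {})" by blast
next
  assume x: "1 \<le> x \<and> (\<forall>e. kirch_basic x e \<longrightarrow> arith_prog x e \<inter> S \<noteq> {})"
  show "x \<in> KT closure_of S"
    unfolding in_closure_of topspace_kirch
  proof (intro conjI allI impI)
    show "x \<in> {1..}" using x by simp
    fix T assume "x \<in> T \<and> openin KT T"
    then obtain e where "kirch_basic x e" "arith_prog x e \<subseteq> T" using openin_kirchE by blast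
    then show "\<exists>y. y \<in> S \<and> y \<in> T" using x by blast
  qed
qed

lemma closure_kirch_mod:
  assumes "x \<in> KT closure_of S" "prime p" "\<not> p dvd x" "\<And>y. y \<in> S \<Longrightarrow> y mod p = c"
  shows "x mod p = c"
proof -
  have "kirch_basic x p" using assms in_closure_kirch_iff kirch_basic_prime by blast
  then obtain y where "y \<in> S" "y \<in> arith_prog x p" using assms(1) in_closure_kirch_iff by blast
  then show ?thesis using assms(4) by (simp add: arith_prog_iff)
qed

lemma in_closure_arith_prog:
  assumes "kirch_basic a b" "v \<ge> 1"
    and "\<And>p. prime p \<Longrightarrow> p dvd b \<Longrightarrow> \<not> p dvd v \<Longrightarrow> v mod p = a mod p"
  shows "v \<in> KT closure_of arith_prog a b"
  unfolding in_closure_kirch_iff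
proof (intro conjI allI impI)
  fix e assume e: "kirch_basic v e"
  show "arith_prog v e \<inter> arith_prog a b \<noteq> {}"
  proof (rule arith_prog_Int_nonempty)
    show "squarefree e" "squarefree b" using e assms(1) by (simp_all add: kirch_basic_def)
    fix p assume "prime p" "p dvd e" "p dvd b"
    then show "v mod p = a mod p" using assms(3) kirch_basic_not_dvd[OF e] by blast
  qed
qed fact

section \<open>Superconnected open sets\<close>

text \<open>For open \<open>X\<close> this says that the subspace \<open>X\<close> is superconnected: the closures of any
  two nonempty open subsets meet.\<close>
definition superconnectedin :: "'a topology \<Rightarrow> 'a set \<Rightarrow> bool" where
  "superconnectedin T X \<longleftrightarrow> (\<forall>U V. openin T U \<longrightarrow> openin T V \<longrightarrow> U \<noteq> {} \<longrightarrow> V \<noteq> {} \<longrightarrow>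
      U \<subseteq> X \<longrightarrow> V \<subseteq> X \<longrightarrow> T closure_of U \<inter> T closure_of V \<inter> X \<noteq> {})"

lemma superconnectedinE:
  assumes "superconnectedin T X" "openin T U" "openin T V" "u \<in> U" "v \<in> V" "U \<subseteq> X" "V \<subseteq> X"
  obtains z where "z \<in> T closure_of U" "z \<in> T closure_of V" "z \<in> X"
  using assms unfolding superconnectedin_def by blast

lemma superconnectedin_homeomorphic_image:
  assumes h: "homeomorphic_map T T' h" and X: "X \<subseteq> topspace T" "superconnectedin T X"
  shows "superconnectedin T' (h ` X)"
proof -
  obtain g where hg: "homeomorphic_maps T T' h g" using h homeomorphic_map_maps by blast
  then have g: "homeomorphic_map T' T g" using homeomorphic_maps_sym homeomorphic_maps_imp_map by blast
  have gh: "g (h x) = x" if "x \<in> topspace T" for x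
    using hg that by (simp add: homeomorphic_maps_def)
  have hg': "h (g y) = y" if "y \<in> topspace T'" for y
    using hg that by (simp add: homeomorphic_maps_def)
  have pull: "openin T (g ` W) \<and> g ` W \<subseteq> X \<and> h ` g ` W = W"
    if W: "openin T' W" "W \<subseteq> h ` X" for W
  proof (intro conjI)
    have Wt: "W \<subseteq> topspace T'" using W(1) by (rule openin_subset)
    then show "openin T (g ` W)" using homeomorphic_map_openness[OF g Wt] W(1) by simp
    show "g ` W \<subseteq> X"
    proof
      fix y assume "y \<in> g ` W"
      then obtain x where "x \<in> X" "y = g (h x)" using W(2) by blast
      then show "y \<in> X" using gh X(1) by auto
    qed
    show "h ` g ` W = W" using Wt hg' by (simp add: image_image subset_iff)
  qed
  show ?thesis
    unfolding superconnectedin_def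
  proof (intro allI impI)
    fix U V assume UV: "openin T' U" "openin T' V" "U \<noteq> {}" "V \<noteq> {}" "U \<subseteq> h ` X" "V \<subseteq> h ` X"
    then obtain u v where "u \<in> U" "v \<in> V" by blast
    then obtain z where z: "z \<in> T closure_of (g ` U)" "z \<in> T closure_of (g ` V)" "z \<in> X"
      using superconnectedinE[OF X(2), of "g ` U" "g ` V"] pull UV by blast
    have "h ` (T closure_of (g ` W)) = T' closure_of W" if "openin T' W" "W \<subseteq> h ` X" for W
      using homeomorphic_map_closure_of[OF h, of "g ` W"] pull[OF that] X(1) by auto
    then have "h z \<in> T' closure_of U \<inter> T' closure_of V \<inter> h ` X" using z UV by blast
    then show "T' closure_of U \<inter> T' closure_of V \<inter> h ` X \<noteq> {}" by blast
  qed
qed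

lemma in_closure_arith_prog_within:
  assumes "kirch_basic w e" "w \<in> arith_prog a b" "z \<in> arith_prog a b" "z \<ge> 1"
    and "\<And>p. prime p \<Longrightarrow> p dvd e \<Longrightarrow> \<not> p dvd b \<Longrightarrow> p dvd z"
  shows "z \<in> KT closure_of arith_prog w e"
proof (rule in_closure_arith_prog[OF assms(1,4)])
  fix p assume "prime p" "p dvd e" "\<not> p dvd z"
  then have "p dvd b" using assms(5) by blast
  then show "z mod p = w mod p" using arith_prog_mod[OF assms(2)] arith_prog_mod[OF assms(3)] by simp
qed

lemma superconnected_arith_prog:
  assumes ab: "kirch_basic a b"
  shows "superconnectedin KT (arith_prog a b)"
  unfolding superconnectedin_def
proof (intro allI impI)
  fix U V assume "openin KT U" "openin KT V" "U \<noteq> {}" "V \<noteq> {}"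
    and UV: "U \<subseteq> arith_prog a b" "V \<subseteq> arith_prog a b"
  then obtain u v where "u \<in> U" "v \<in> V" by blast
  obtain e1 where e1: "kirch_basic u e1" "arith_prog u e1 \<subseteq> U"
    using openin_kirchE[OF \<open>openin KT U\<close> \<open>u \<in> U\<close>] .
  obtain e2 where e2: "kirch_basic v e2" "arith_prog v e2 \<subseteq> V"
    using openin_kirchE[OF \<open>openin KT V\<close> \<open>v \<in> V\<close>] .
  define P where "P = {p. prime p \<and> p dvd b * (e1 * e2)}"
  have "b * (e1 * e2) > 0" using ab e1 e2 by (simp add: kirch_basic_pos)
  then have "finite P" unfolding P_def by (rule finite_prime_divisors)
  then obtain z where z: "z \<ge> a" "\<forall>p\<in>P. z mod p = (if p dvd b then a else 0) mod p"
    using primes_chinese_remainder[of P a "\<lambda>p. if p dvd b then a else 0"] unfolding P_def by blast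
  have "z mod b = a mod b"
  proof (rule mod_eq_squarefreeI)
    show "squarefree b" using ab by (simp add: kirch_basic_def)
    fix p assume "prime p" "p dvd b"
    then show "z mod p = a mod p" using z(2) by (simp add: P_def)
  qed
  then have za: "z \<in> arith_prog a b" using z(1) by (simp add: arith_prog_iff)
  have "z \<ge> 1" using kirch_basic_arith_prog[OF ab za] by (simp add: kirch_basic_def)
  have mult: "p dvd z" if "prime p" "p dvd e1 * e2" "\<not> p dvd b" for p
  proof -
    have "p \<in> P" using that(1,2) by (simp add: P_def)
    then have "z mod p = 0" using z(2) that(3) by simp
    then show ?thesis by (simp add: dvd_eq_mod_eq_0)
  qed
  have "u \<in> arith_prog a b" "v \<in> arith_prog a b" using e1 e2 UV arith_prog_start by blast+
  then have "z \<in> KT closure_of arith_prog u e1" "z \<in> KT closure_of arith_prog v e2"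
    using in_closure_arith_prog_within[OF e1(1) _ za \<open>z \<ge> 1\<close>]
      in_closure_arith_prog_within[OF e2(1) _ za \<open>z \<ge> 1\<close>] mult by auto
  then have "z \<in> KT closure_of U" "z \<in> KT closure_of V"
    using e1(2) e2(2) closure_of_mono by blast+
  then show "KT closure_of U \<inter> KT closure_of V \<inter> arith_prog a b \<noteq> {}" using za by blast
qed

definition avoiding_primes :: "nat set \<Rightarrow> nat set" where
  "avoiding_primes X = {p. prime p \<and> (\<forall>x\<in>X. \<not> p dvd x)}"

lemma superconnected_single_residue:
  assumes X: "openin KT X" "superconnectedin KT X" and p: "p \<in> avoiding_primes X"
    and "x \<in> X" "y \<in> X"
  shows "x mod p = y mod p"
proof -
  have "prime p" using p by (simp add: avoiding_primes_def)
  have nbhd: "kirch_basic w p" "openin KT (X \<inter> arith_prog w p)" if "w \<in> X" for w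
  proof -
    show "kirch_basic w p"
      using that p openin_kirch_subset[OF X(1)] by (auto simp: avoiding_primes_def kirch_basic_prime)
    then show "openin KT (X \<inter> arith_prog w p)" using X(1) openin_kirch_arith_prog by blast
  qed
  obtain z where z: "z \<in> KT closure_of (X \<inter> arith_prog x p)" "z \<in> KT closure_of (X \<inter> arith_prog y p)"
    "z \<in> X"
    using superconnectedinE[OF X(2) nbhd(2) nbhd(2)] \<open>x \<in> X\<close> \<open>y \<in> X\<close> arith_prog_start by blast
  have "\<not> p dvd z" using p z(3) by (simp add: avoiding_primes_def)
  have "z mod p = w mod p" if "z \<in> KT closure_of (X \<inter> arith_prog w p)" for w
    using closure_kirch_mod[OF that \<open>prime p\<close> \<open>\<not> p dvd z\<close>] by (simp add: arith_prog_iff)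
  then show ?thesis using z by metis
qed

lemma finite_avoiding_primes:
  assumes "openin KT X" "X \<noteq> {}"
  shows "finite (avoiding_primes X)"
proof -
  obtain x where "x \<in> X" using assms(2) by blast
  then obtain e where e: "kirch_basic x e" "arith_prog x e \<subseteq> X" using assms(1) openin_kirchE by blast
  have "avoiding_primes X \<subseteq> {p. prime p \<and> p dvd e}"
  proof
    fix p assume p: "p \<in> avoiding_primes X"
    then have "prime p" by (simp add: avoiding_primes_def)
    show "p \<in> {p. prime p \<and> p dvd e}"
    proof (rule ccontr)
      assume "p \<notin> {p. prime p \<and> p dvd e}"
      then have "\<not> p dvd e" using \<open>prime p\<close> by simp
      then obtain v where "v \<in> arith_prog x e" "v mod p = 0 mod p"
        using kirch_basic_meets_residue[OF e(1) \<open>prime p\<close>] by blast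
      then show False using p e(2) by (auto simp: avoiding_primes_def)
    qed
  qed
  then show ?thesis using finite_prime_divisors[OF kirch_basic_pos[OF e(1)]] by (rule finite_subset)
qed

lemma open_meets_residue:
  assumes "openin KT X" "prime p" "p \<notin> avoiding_primes X"
  obtains v where "v \<in> X" "v mod p = t mod p"
proof -
  obtain w where w: "w \<in> X" "p dvd w" using assms(2,3) by (auto simp: avoiding_primes_def)
  then obtain f where f: "kirch_basic w f" "arith_prog w f \<subseteq> X" using assms(1) openin_kirchE by blast
  have "\<not> p dvd f" using kirch_basic_not_dvd[OF f(1) assms(2)] w(2) by blast
  then obtain v where "v \<in> arith_prog w f" "v mod p = t mod p"
    using kirch_basic_meets_residue[OF f(1) assms(2)] by blast
  then show ?thesis using f(2) that by blast
qed

lemma superconnected_multiple_in_closure: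
  assumes X: "openin KT X" "superconnectedin KT X"
    and U: "kirch_basic z0 e0" "arith_prog z0 e0 \<subseteq> X"
    and p: "prime p" "p dvd e0" "\<not> p dvd u" "z0 mod p \<noteq> u mod p"
    and avoid: "p \<in> avoiding_primes X \<Longrightarrow> \<exists>x\<in>X. x mod p = u mod p"
  obtains z where "z \<in> X" "p dvd z" "\<And>s. prime s \<Longrightarrow> s dvd e0 \<Longrightarrow> \<not> s dvd z \<Longrightarrow> z mod s = z0 mod s"
proof -
  have "p \<notin> avoiding_primes X"
  proof
    assume "p \<in> avoiding_primes X"
    then obtain x where "x \<in> X" "x mod p = u mod p" using avoid by blast
    moreover have "z0 \<in> X" using U(2) arith_prog_start by blast
    ultimately show False
      using superconnected_single_residue[OF X \<open>p \<in> avoiding_primes X\<close>] p(4) by metis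
  qed
  then obtain v where v: "v \<in> X" "v mod p = u mod p" using open_meets_residue[OF X(1) p(1)] by blast
  then have "\<not> p dvd v" using p(3) by (simp add: dvd_eq_mod_eq_0)
  moreover have "v \<ge> 1" using openin_kirch_subset[OF X(1)] v(1) by auto
  ultimately have "openin KT (X \<inter> arith_prog v p)"
    using X(1) openin_kirch_arith_prog kirch_basic_prime[OF p(1)] by blast
  moreover have "v \<in> X \<inter> arith_prog v p" using v(1) by simp
  ultimately obtain z where z: "z \<in> KT closure_of arith_prog z0 e0"
    "z \<in> KT closure_of (X \<inter> arith_prog v p)" "z \<in> X"
    using superconnectedinE[OF X(2) openin_kirch_arith_prog[OF U(1)] _ arith_prog_start _ U(2)]
    by blast
  have z0: "z mod s = z0 mod s" if "prime s" "s dvd e0" "\<not> s dvd z" for s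
    using closure_kirch_mod[OF z(1) that(1,3)] arith_prog_mod that(2) by blast
  have "p dvd z"
  proof (rule ccontr)
    assume "\<not> p dvd z"
    then have "z mod p = v mod p"
      using closure_kirch_mod[OF z(2) p(1)] by (simp add: arith_prog_iff)
    then show False using z0[OF p(1,2)] \<open>\<not> p dvd z\<close> v(2) p(4) by simp
  qed
  then show ?thesis using that z(3) z0 by blast
qed

lemma superconnected_basic_subset_residues:
  assumes X: "openin KT X" "superconnectedin KT X" "X \<noteq> {}"
    and "finite Q" "\<forall>s\<in>Q. prime s \<and> \<not> s dvd u"
    and "\<forall>s\<in>Q \<inter> avoiding_primes X. \<exists>x\<in>X. x mod s = u mod s"
  shows "\<exists>z e. kirch_basic z e \<and> arith_prog z e \<subseteq> X \<and> (\<forall>s\<in>Q. s dvd e \<and> z mod s = u mod s)"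
  using assms(4-6)
proof (induction Q rule: finite_induct)
  case empty
  obtain x where "x \<in> X" using X(3) by blast
  then show ?case using X(1) openin_kirchE by blast
next
  case (insert p Q)
  then obtain z0 e0 where z0: "kirch_basic z0 e0" "arith_prog z0 e0 \<subseteq> X"
    "\<forall>s\<in>Q. s dvd e0 \<and> z0 mod s = u mod s" by auto
  have p: "prime p" "\<not> p dvd u" using insert.prems(1) by auto
  obtain z e where ze: "kirch_basic z e" "arith_prog z e \<subseteq> X"
    "\<forall>s\<in>insert p Q. s dvd e \<longrightarrow> z mod s = u mod s"
  proof (cases "p dvd e0 \<longrightarrow> z0 mod p = u mod p")
    case True
    then show ?thesis using that[OF z0(1,2)] z0(3) by blast
  next
    case False
    \<comment> \<open>As \<open>p\<close> divides \<open>e0\<close>, all of \<open>arith_prog z0 e0\<close> has the wrong residue modulo \<open>p\<close>: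
      move to a nearby multiple of \<open>p\<close>, around which every residue occurs.\<close>
    then have bad: "p dvd e0" "z0 mod p \<noteq> u mod p" by auto
    have avoid: "p \<in> avoiding_primes X \<Longrightarrow> \<exists>x\<in>X. x mod p = u mod p"
      using insert.prems(2) by blast
    obtain y where y: "y \<in> X" "p dvd y"
      "\<And>s. prime s \<Longrightarrow> s dvd e0 \<Longrightarrow> \<not> s dvd y \<Longrightarrow> y mod s = z0 mod s"
      using superconnected_multiple_in_closure[OF X(1,2) z0(1,2) p(1) bad(1) p(2) bad(2) avoid] by blast
    obtain f where f: "kirch_basic y f" "arith_prog y f \<subseteq> X" using X(1) y(1) openin_kirchE by blast
    have "y mod s = u mod s" if "s \<in> insert p Q" "s dvd f" for s
    proof -
      have "prime s" using that(1) insert.prems(1) by blast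
      then have "\<not> s dvd y" using kirch_basic_not_dvd[OF f(1)] that(2) by blast
      then have "s \<in> Q" using that(1) y(2) by auto
      then show ?thesis using y(3) \<open>prime s\<close> \<open>\<not> s dvd y\<close> z0(3) by simp
    qed
    then show ?thesis using that[OF f] by blast
  qed
  obtain z' e' where "kirch_basic z' e'" "arith_prog z' e' \<subseteq> arith_prog z e"
    "\<forall>s\<in>insert p Q. s dvd e' \<and> z' mod s = u mod s"
    using arith_prog_refine[OF ze(1) _ insert.prems(1) ze(3)] insert.hyps(1) by blast
  then show ?case using ze(2) by (meson order_trans)
qed

lemma superconnected_meets_arith_prog:
  assumes X: "openin KT X" "superconnectedin KT X" "X \<noteq> {}" and u: "kirch_basic u e"
    and "\<And>s. s \<in> avoiding_primes X \<Longrightarrow> s dvd e \<Longrightarrow> \<exists>x\<in>X. x mod s = u mod s"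
  shows "X \<inter> arith_prog u e \<noteq> {}"
proof -
  define Q where "Q = {s. prime s \<and> s dvd e}"
  have "finite Q" unfolding Q_def using kirch_basic_pos[OF u] by (rule finite_prime_divisors)
  moreover have "\<forall>s\<in>Q. prime s \<and> \<not> s dvd u"
    unfolding Q_def using kirch_basic_not_dvd[OF u] by blast
  moreover have "\<forall>s\<in>Q \<inter> avoiding_primes X. \<exists>x\<in>X. x mod s = u mod s"
    using assms(5) unfolding Q_def by blast
  ultimately have "\<exists>z f. kirch_basic z f \<and> arith_prog z f \<subseteq> X \<and>
      (\<forall>s\<in>Q. s dvd f \<and> z mod s = u mod s)"
    by (rule superconnected_basic_subset_residues[OF X])
  then obtain z f where z: "kirch_basic z f" "arith_prog z f \<subseteq> X"
    "\<forall>s\<in>Q. s dvd f \<and> z mod s = u mod s" by blast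
  have "arith_prog z f \<inter> arith_prog u e \<noteq> {}"
  proof (rule arith_prog_Int_nonempty)
    show "squarefree f" "squarefree e" using z(1) u by (simp_all add: kirch_basic_def)
    fix p assume "prime p" "p dvd f" "p dvd e"
    then have "p \<in> Q" by (simp add: Q_def)
    then show "z mod p = u mod p" using z(3) by blast
  qed
  then show ?thesis using z(2) by blast
qed

lemma disjoint_superconnected_separating_prime:
  assumes X: "openin KT X" "superconnectedin KT X" "X \<noteq> {}"
    and Y: "openin KT Y" "superconnectedin KT Y" "Y \<noteq> {}" and XY: "X \<inter> Y = {}"
  obtains p where "p \<in> avoiding_primes X" "p \<in> avoiding_primes Y"
    "\<And>x y. x \<in> X \<Longrightarrow> y \<in> Y \<Longrightarrow> x mod p \<noteq> y mod p"
proof (rule ccontr)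
  assume "\<not> thesis"
  note separating = that
  have H: "\<exists>x\<in>X. \<exists>y\<in>Y. x mod p = y mod p"
    if "p \<in> avoiding_primes X" "p \<in> avoiding_primes Y" for p
    using separating that \<open>\<not> thesis\<close> by blast
  \<comment> \<open>Then \<open>X\<close> meets the class of a point of \<open>Y\<close> modulo the primes avoiding \<open>Y\<close>, and a basic
    neighbourhood in \<open>X\<close> of such a point meets \<open>Y\<close>.\<close>
  obtain y0 where y0: "y0 \<in> Y" using Y(3) by blast
  define e where "e = \<Prod>(avoiding_primes Y)"
  have finY: "finite (avoiding_primes Y)" using Y(1,3) by (rule finite_avoiding_primes)
  have "kirch_basic y0 e"
    unfolding e_def using finY
  proof (rule kirch_basic_prod_primes)
    show "prime s \<and> \<not> s dvd y0" if "s \<in> avoiding_primes Y" for s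
      using that y0 by (simp add: avoiding_primes_def)
    show "y0 \<ge> 1" using openin_kirch_subset[OF Y(1)] y0 by auto
  qed
  have "X \<inter> arith_prog y0 e \<noteq> {}"
  proof (rule superconnected_meets_arith_prog[OF X \<open>kirch_basic y0 e\<close>])
    fix s assume s: "s \<in> avoiding_primes X" "s dvd e"
    then have "s \<in> avoiding_primes Y"
      using prime_dvd_prod_primes[OF finY] unfolding e_def avoiding_primes_def by blast
    then obtain x y where "x \<in> X" "y \<in> Y" "x mod s = y mod s" using H s(1) by blast
    moreover have "y mod s = y0 mod s"
      using superconnected_single_residue[OF Y(1,2) \<open>s \<in> avoiding_primes Y\<close> \<open>y \<in> Y\<close> y0] .
    ultimately show "\<exists>x\<in>X. x mod s = y0 mod s" by auto
  qed
  then obtain w where w: "w \<in> X" "w \<in> arith_prog y0 e" by blast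
  then obtain f where f: "kirch_basic w f" "arith_prog w f \<subseteq> X" using X(1) openin_kirchE by blast
  have "Y \<inter> arith_prog w f \<noteq> {}"
  proof (rule superconnected_meets_arith_prog[OF Y f(1)])
    fix s assume "s \<in> avoiding_primes Y" "s dvd f"
    then have "s dvd e" unfolding e_def using dvd_prodI[OF finY, of s "\<lambda>x. x"] by simp
    then have "w mod s = y0 mod s" using arith_prog_mod[OF w(2)] by blast
    then show "\<exists>y\<in>Y. y mod s = w mod s" using y0 by auto
  qed
  then show False using f(2) XY by blast
qed

text \<open>The family below models the images of the classes \<open>arith_prog j q\<close>, \<open>0 < j < q\<close>, under a
  homeomorphism; its boundary consists of the images of the multiples of \<open>q\<close>.\<close>
context
  fixes I :: "'i set" and A :: "'i \<Rightarrow> nat set"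
  assumes family_open: "\<And>j. j \<in> I \<Longrightarrow> openin KT (A j)"
    and family_nonempty: "\<And>j. j \<in> I \<Longrightarrow> A j \<noteq> {}"
    and family_superconnected: "\<And>j. j \<in> I \<Longrightarrow> superconnectedin KT (A j)"
    and family_disjoint: "\<And>i j. i \<in> I \<Longrightarrow> j \<in> I \<Longrightarrow> i \<noteq> j \<Longrightarrow> A i \<inter> A j = {}"
    and family_boundary: "\<And>z j. z \<ge> 1 \<Longrightarrow> z \<notin> (\<Union>l\<in>I. A l) \<Longrightarrow> j \<in> I \<Longrightarrow> z \<in> KT closure_of A j"
begin

lemma family_separating_prime:
  assumes "i \<in> I" "j \<in> I" "i \<noteq> j"
  obtains p where "p \<in> avoiding_primes (A i)" "p \<in> avoiding_primes (A j)"
    "\<And>x y. x \<in> A i \<Longrightarrow> y \<in> A j \<Longrightarrow> x mod p \<noteq> y mod p"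
  using disjoint_superconnected_separating_prime[OF family_open family_superconnected
      family_nonempty family_open family_superconnected family_nonempty family_disjoint] assms
  by blast

text \<open>Divisible by \<open>r\<close>, the point \<open>z\<close> is not in \<open>A i\<close>; agreeing with \<open>A i\<close> modulo every other
  prime avoiding \<open>A i\<close>, it lies in the closure of \<open>A i\<close>, so it is in no other open \<open>A l\<close> either.\<close>
lemma family_closure_point:
  assumes i: "i \<in> I" and r: "r \<in> avoiding_primes (A i)" and x: "x \<in> A i"
    and z: "z \<ge> 1" "r dvd z" "\<And>s. s \<in> avoiding_primes (A i) \<Longrightarrow> s \<noteq> r \<Longrightarrow> z mod s = x mod s"
    and j: "j \<in> I"
  shows "z \<in> KT closure_of A j"
proof -
  have "z \<notin> A l" if l: "l \<in> I" for l
  proof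
    assume "z \<in> A l"
    show False
    proof (cases "l = i")
      case True
      then show False using \<open>z \<in> A l\<close> z(2) r by (simp add: avoiding_primes_def)
    next
      case False
      obtain e where e: "kirch_basic z e" "arith_prog z e \<subseteq> A l"
        using family_open[OF l] \<open>z \<in> A l\<close> openin_kirchE by blast
      have "A i \<inter> arith_prog z e \<noteq> {}"
      proof (rule superconnected_meets_arith_prog[OF family_open[OF i]
            family_superconnected[OF i] family_nonempty[OF i] e(1)])
        fix s assume s: "s \<in> avoiding_primes (A i)" "s dvd e"
        then have "\<not> s dvd z" using kirch_basic_not_dvd[OF e(1)] by (simp add: avoiding_primes_def)
        then have "z mod s = x mod s" using z(2,3) s(1) by blast
        then show "\<exists>x'\<in>A i. x' mod s = z mod s" using x by auto
      qed
      then show False using e(2) family_disjoint[OF i l] False by blast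
    qed
  qed
  then show ?thesis using family_boundary z(1) j by blast
qed

lemma family_avoiding_prime_separates:
  assumes ij: "i \<in> I" "j \<in> I" "i \<noteq> j" and r: "r \<in> avoiding_primes (A i)"
  shows "r \<in> avoiding_primes (A j) \<and> (\<forall>x\<in>A i. \<forall>y\<in>A j. x mod r \<noteq> y mod r)"
proof -
  obtain p where p: "p \<in> avoiding_primes (A i)" "p \<in> avoiding_primes (A j)"
    "\<And>x y. x \<in> A i \<Longrightarrow> y \<in> A j \<Longrightarrow> x mod p \<noteq> y mod p"
    using family_separating_prime[OF ij] by blast
  obtain x y where xy: "x \<in> A i" "y \<in> A j" using family_nonempty ij(1,2) by blast
  have "p = r"
  proof (rule ccontr)
    assume "p \<noteq> r"
    have "finite (avoiding_primes (A i))"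
      using family_open family_nonempty ij(1) by (blast intro: finite_avoiding_primes)
    then have "\<exists>z\<ge>1. \<forall>s\<in>insert r (avoiding_primes (A i)). z mod s = (if s = r then 0 else x) mod s"
      using r by (intro primes_chinese_remainder) (auto simp: avoiding_primes_def)
    then obtain z where z: "z \<ge> 1"
      "\<forall>s\<in>insert r (avoiding_primes (A i)). z mod s = (if s = r then 0 else x) mod s"
      by blast
    have "r dvd z" using z(2) by (simp add: dvd_eq_mod_eq_0)
    have zi: "z mod s = x mod s" if "s \<in> avoiding_primes (A i)" "s \<noteq> r" for s
      using z(2) that by simp
    have "z \<in> KT closure_of A j"
      using family_closure_point[OF ij(1) r xy(1) z(1) \<open>r dvd z\<close> zi ij(2)] .
    moreover have zx: "z mod p = x mod p" using zi p(1) \<open>p \<noteq> r\<close> by blast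
    moreover have "\<not> p dvd z"
      using zx p(1) xy(1) by (simp add: avoiding_primes_def dvd_eq_mod_eq_0)
    moreover have "\<forall>y'\<in>A j. y' mod p = y mod p"
      using superconnected_single_residue[OF family_open[OF ij(2)] family_superconnected[OF ij(2)] p(2)]
        xy(2) by blast
    moreover have "prime p" using p(1) by (simp add: avoiding_primes_def)
    ultimately have "x mod p = y mod p" using closure_kirch_mod by metis
    then show False using p(3) xy by blast
  qed
  then show ?thesis using p by blast
qed

lemma family_residue_classes:
  assumes "i0 \<in> I" "j0 \<in> I" "i0 \<noteq> j0"
  obtains r c where "prime r" "inj_on c I" "\<And>j. j \<in> I \<Longrightarrow> c j \<in> {1..<r}"
    "\<And>j x. j \<in> I \<Longrightarrow> x \<in> A j \<Longrightarrow> x mod r = c j"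
proof -
  obtain r where r: "r \<in> avoiding_primes (A i0)" using family_separating_prime[OF assms] by blast
  have rj: "r \<in> avoiding_primes (A j)" if "j \<in> I" for j
    using family_avoiding_prime_separates[OF assms(1) that _ r] r by (cases "j = i0") auto
  have "prime r" using r by (simp add: avoiding_primes_def)
  define pt where "pt j = (SOME x. x \<in> A j)" for j
  have pt: "pt j \<in> A j" if "j \<in> I" for j
    unfolding pt_def using family_nonempty[OF that] by (simp add: some_in_eq)
  define c where "c j = pt j mod r" for j
  have cls: "x mod r = c j" if "j \<in> I" "x \<in> A j" for j x
    unfolding c_def using superconnected_single_residue[OF family_open family_superconnected rj]
      that pt by blast
  have "c j \<in> {1..<r}" if "j \<in> I" for j
    using rj[OF that] pt[OF that] prime_gt_0_nat[OF \<open>prime r\<close>]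
    by (auto simp: c_def avoiding_primes_def dvd_eq_mod_eq_0 Suc_le_eq)
  moreover have "inj_on c I"
  proof (rule inj_onI)
    fix i j assume "i \<in> I" "j \<in> I" "c i = c j"
    then show "i = j"
      using family_avoiding_prime_separates[OF \<open>i \<in> I\<close> \<open>j \<in> I\<close> _ rj] pt unfolding c_def by blast
  qed
  ultimately show ?thesis using that \<open>prime r\<close> cls by blast
qed

end

section \<open>Homeomorphisms permute the residue classes modulo an odd prime\<close>

lemma residue_in_units:
  fixes q x :: nat
  assumes "prime q" "\<not> q dvd x"
  shows "x mod q \<in> {1..<q}"
proof -
  have "x mod q \<noteq> 0" using assms(2) mod_0_imp_dvd by blast
  moreover have "x mod q < q" using prime_gt_0_nat[OF assms(1)] by simp
  ultimately show ?thesis by simp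
qed

lemma kirch_basic_residue_class:
  assumes "prime q" "j \<in> {1..<q}"
  shows "kirch_basic j q"
proof (rule kirch_basic_prime[OF assms(1)])
  show "\<not> q dvd j" using assms(2) by (auto dest: dvd_imp_le)
qed (use assms(2) in simp)

lemma multiple_in_closure_residue_class:
  assumes "prime q" "j \<in> {1..<q}" "x \<ge> 1" "q dvd x"
  shows "x \<in> KT closure_of arith_prog j q"
proof (rule in_closure_arith_prog[OF kirch_basic_residue_class[OF assms(1,2)] assms(3)])
  fix p assume "prime p" "p dvd q" "\<not> p dvd x"
  then show "x mod p = j mod p" using assms(1,4) primes_dvd_imp_eq by blast
qed

lemma homeomorphism_kirch_ge1:
  assumes "homeomorphic_map KT KT h" "x \<ge> 1"
  shows "h x \<ge> 1"
proof -
  have "h ` topspace KT = topspace KT" using assms(1) by (rule homeomorphic_imp_surjective_map)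
  then show ?thesis using assms(2) by (auto simp: topspace_kirch)
qed

lemma homeomorphism_residue_classes_boundary:
  assumes hg: "homeomorphic_maps KT KT h g" and q: "prime q" "j \<in> {1..<q}"
    and z: "z \<ge> 1" "z \<notin> (\<Union>l\<in>{1..<q}. h ` arith_prog l q)"
  shows "z \<in> KT closure_of (h ` arith_prog j q)"
proof -
  have h: "homeomorphic_map KT KT h" using hg homeomorphic_maps_imp_map by blast
  have g: "homeomorphic_map KT KT g" using hg homeomorphic_maps_sym homeomorphic_maps_imp_map by blast
  have hgz: "h (g z) = z" using hg z(1) by (simp add: homeomorphic_maps_def topspace_kirch)
  have "q dvd g z"
  proof (rule ccontr)
    assume "\<not> q dvd g z"
    then have "g z mod q \<in> {1..<q}" by (rule residue_in_units[OF q(1)])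
    have "g z \<in> arith_prog (g z mod q) q" by (simp add: arith_prog_iff)
    then have "z \<in> h ` arith_prog (g z mod q) q" by (rule image_eqI[where f = h, OF hgz[symmetric]])
    then show False using z(2) \<open>g z mod q \<in> {1..<q}\<close> by blast
  qed
  then have "g z \<in> KT closure_of arith_prog j q"
    using multiple_in_closure_residue_class[OF q] homeomorphism_kirch_ge1[OF g z(1)] by blast
  then have "h (g z) \<in> h ` (KT closure_of arith_prog j q)" by (rule imageI)
  then show ?thesis
    using homeomorphic_map_closure_of[OF h arith_prog_subset_topspace_kirch[OF kirch_basic_residue_class[OF q]]]
      hgz by simp
qed

lemma homeomorphism_residue_classes_into:
  assumes hg: "homeomorphic_maps KT KT h g" and q: "prime q" "q > 2"
  obtains r c where "prime r" "inj_on c {1..<q}" "\<And>j. j \<in> {1..<q} \<Longrightarrow> c j \<in> {1..<r}"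
    "\<And>j. j \<in> {1..<q} \<Longrightarrow> h ` arith_prog j q \<subseteq> arith_prog (c j) r"
proof -
  have h: "homeomorphic_map KT KT h" using hg homeomorphic_maps_imp_map by blast
  define A where "A j = h ` arith_prog j q" for j
  have basic: "kirch_basic j q" if "j \<in> {1..<q}" for j using kirch_basic_residue_class q(1) that .
  then have ap_top: "arith_prog j q \<subseteq> topspace KT" if "j \<in> {1..<q}" for j
    using that by (simp add: arith_prog_subset_topspace_kirch)
  obtain r c where rc: "prime r" "inj_on c {1..<q}" "\<And>j. j \<in> {1..<q} \<Longrightarrow> c j \<in> {1..<r}"
    and cls: "\<And>j x. j \<in> {1..<q} \<Longrightarrow> x \<in> A j \<Longrightarrow> x mod r = c j"
  proof (rule family_residue_classes[of "{1..<q}" A 1 2])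
    fix j assume j: "j \<in> {1..<q}"
    show "openin KT (A j)"
      unfolding A_def using homeomorphic_map_openness[OF h ap_top[OF j]] openin_kirch_arith_prog[OF basic[OF j]]
      by simp
    show "A j \<noteq> {}" unfolding A_def using arith_prog_start by blast
    show "superconnectedin KT (A j)"
      unfolding A_def using superconnectedin_homeomorphic_image[OF h ap_top[OF j]]
        superconnected_arith_prog[OF basic[OF j]] by blast
  next
    fix i j assume ij: "i \<in> {1..<q}" "j \<in> {1..<q}" "i \<noteq> j"
    have "arith_prog i q \<inter> arith_prog j q = {}" using ij arith_prog_residue_iff by auto
    then show "A i \<inter> A j = {}"
      unfolding A_def using inj_on_image_Int[OF homeomorphic_imp_injective_map[OF h] ap_top[OF ij(1)]
        ap_top[OF ij(2)]] by simp
  next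
    fix z j assume "z \<ge> 1" "z \<notin> (\<Union>l\<in>{1..<q}. A l)" "j \<in> {1..<q}"
    then show "z \<in> KT closure_of A j"
      unfolding A_def using homeomorphism_residue_classes_boundary[OF hg q(1)] by blast
  qed (use q in auto)
  moreover have "h ` arith_prog j q \<subseteq> arith_prog (c j) r" if "j \<in> {1..<q}" for j
  proof
    fix y assume "y \<in> h ` arith_prog j q"
    then have "y mod r = c j" using cls[OF that] unfolding A_def by blast
    then show "y \<in> arith_prog (c j) r" using rc(3)[OF that] arith_prog_residue_iff by simp
  qed
  ultimately show ?thesis using that rc by blast
qed

lemma arith_prog_residue_class_subset:
  assumes q: "prime q" "j \<in> {1..<q}" and r: "prime r" "c \<in> {1..<r}"
    and sub: "arith_prog j q \<subseteq> arith_prog c r"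
  shows "q = r \<and> j = c"
proof -
  have "q = r"
  proof (rule ccontr)
    assume "q \<noteq> r"
    then have "coprime q r" using q(1) r(1) by (simp add: primes_coprime)
    then obtain v where "v \<in> arith_prog j q" "v mod r = 0 mod r"
      using arith_prog_meets_residue[OF prime_gt_0_nat[OF q(1)] prime_gt_0_nat[OF r(1)]] by blast
    then have "v mod r = 0" "v mod r = c" using sub r(2) arith_prog_residue_iff[of c r v] by auto
    then show False using r(2) by simp
  qed
  moreover have "j \<in> arith_prog c r" using sub arith_prog_start by blast
  then have "j mod r = c" using r(2) arith_prog_residue_iff by simp
  ultimately show ?thesis using q(2) by simp
qed

lemma homeomorphism_permutes_residue_classes:
  assumes h: "homeomorphic_map KT KT h" and q: "prime q" "q > 2"
  obtains \<sigma> where "bij_betw \<sigma> {1..<q} {1..<q}"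
    "\<And>j. j \<in> {1..<q} \<Longrightarrow> h ` arith_prog j q = arith_prog (\<sigma> j) q"
proof -
  obtain g where hg: "homeomorphic_maps KT KT h g" using h homeomorphic_map_maps by blast
  have inv: "g (h x) = x" "h (g x) = x" if "x \<ge> 1" for x
    using hg that by (simp_all add: homeomorphic_maps_def topspace_kirch)
  obtain r c where r: "prime r" "inj_on c {1..<q}" "\<And>j. j \<in> {1..<q} \<Longrightarrow> c j \<in> {1..<r}"
    and hc: "\<And>j. j \<in> {1..<q} \<Longrightarrow> h ` arith_prog j q \<subseteq> arith_prog (c j) r"
    using homeomorphism_residue_classes_into[OF hg q] by blast
  have "card {1..<q} \<le> card {1..<r}" using card_inj_on_le[OF r(2)] r(3) by blast
  then have "q \<le> r" using q(2) by simp
  obtain r' c' where r': "prime r'" "inj_on c' {1..<r}" "\<And>j. j \<in> {1..<r} \<Longrightarrow> c' j \<in> {1..<r'}"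
    and gc: "\<And>j. j \<in> {1..<r} \<Longrightarrow> g ` arith_prog j r \<subseteq> arith_prog (c' j) r'"
    using homeomorphism_residue_classes_into[OF homeomorphic_maps_sym[THEN iffD1, OF hg] r(1)]
      q(2) \<open>q \<le> r\<close> by auto
  have cc: "r' = q \<and> c' (c j) = j" if j: "j \<in> {1..<q}" for j
  proof -
    have "arith_prog j q \<subseteq> g ` h ` arith_prog j q"
    proof
      fix x assume "x \<in> arith_prog j q"
      moreover have "x \<ge> 1" using arith_prog_ge[OF \<open>x \<in> arith_prog j q\<close>] j by simp
      ultimately show "x \<in> g ` h ` arith_prog j q" using inv(1) by (metis image_eqI)
    qed
    also have "\<dots> \<subseteq> arith_prog (c' (c j)) r'" using hc[OF j] gc[OF r(3)[OF j]] by blast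
    finally show ?thesis using arith_prog_residue_class_subset[OF q(1) j r'(1) r'(3)[OF r(3)[OF j]]] by simp
  qed
  moreover have "1 \<in> {1..<q}" using q(2) by simp
  ultimately have "r' = q" by blast
  then have "card {1..<r} \<le> card {1..<q}" using card_inj_on_le[OF r'(2)] r'(3) by blast
  then have "r = q" using \<open>q \<le> r\<close> q(2) by simp
  have "c ` {1..<q} \<subseteq> {1..<q}" using r(3) \<open>r = q\<close> by blast
  then have bij: "bij_betw c {1..<q} {1..<q}"
    using endo_inj_surj[OF finite_atLeastLessThan _ r(2)] r(2) by (simp add: bij_betw_def)
  have "h ` arith_prog j q = arith_prog (c j) q" if j: "j \<in> {1..<q}" for j
  proof -
    have "h ` arith_prog j q \<subseteq> arith_prog (c j) q" using hc[OF j] \<open>r = q\<close> by simp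
    moreover have "g ` arith_prog (c j) q \<subseteq> arith_prog j q"
      using gc[OF r(3)[OF j]] cc[OF j] \<open>r = q\<close> by simp
    moreover have "x \<ge> 1" if "x \<in> arith_prog j q \<union> arith_prog (c j) q" for x
      using that j r(3)[OF j] by (auto dest!: arith_prog_ge)
    ultimately have "bij_betw h (arith_prog j q) (arith_prog (c j) q)"
      using inv by (intro bij_betw_byWitness[where f' = g]) auto
    then show ?thesis by (rule bij_betw_imp_surj_on)
  qed
  then show ?thesis using that bij by blast
qed

section \<open>Homeomorphisms preserve parity\<close>

definition semiregular_at :: "'a topology \<Rightarrow> 'a \<Rightarrow> bool" where
  "semiregular_at T x \<longleftrightarrow> (\<forall>N. openin T N \<longrightarrow> x \<in> N \<longrightarrow>
      (\<exists>N'. openin T N' \<and> x \<in> N' \<and> T interior_of (T closure_of N') \<subseteq> N))"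

lemma semiregular_at_homeomorphic_image:
  assumes h: "homeomorphic_map T T' h" and x: "x \<in> topspace T" and "semiregular_at T x"
  shows "semiregular_at T' (h x)"
  unfolding semiregular_at_def
proof (intro allI impI)
  fix N assume N: "openin T' N" "h x \<in> N"
  obtain g where hg: "homeomorphic_maps T T' h g" using h homeomorphic_map_maps by blast
  then have g: "homeomorphic_map T' T g" using homeomorphic_maps_sym homeomorphic_maps_imp_map by blast
  have Nt: "N \<subseteq> topspace T'" using N(1) by (rule openin_subset)
  have hgN: "h ` g ` N = N"
  proof -
    have "h (g y) = y" if "y \<in> N" for y using hg Nt that by (auto simp: homeomorphic_maps_def)
    then show ?thesis by (force simp: image_image)
  qed
  have "openin T (g ` N)" using homeomorphic_map_openness[OF g Nt] N(1) by simp
  moreover have "x \<in> g ` N"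
    using hg x N(2) unfolding homeomorphic_maps_def by (metis image_eqI)
  ultimately obtain M where M: "openin T M" "x \<in> M" "T interior_of (T closure_of M) \<subseteq> g ` N"
    using \<open>semiregular_at T x\<close> unfolding semiregular_at_def by blast
  have Mt: "M \<subseteq> topspace T" using M(1) by (rule openin_subset)
  have "T' interior_of (T' closure_of (h ` M)) = h ` (T interior_of (T closure_of M))"
    using homeomorphic_map_closure_of[OF h Mt]
      homeomorphic_map_interior_of[OF h closure_of_subset_topspace] by simp
  also have "\<dots> \<subseteq> N" using M(3) hgN by blast
  finally have "T' interior_of (T' closure_of (h ` M)) \<subseteq> N" .
  moreover have "openin T' (h ` M)" using homeomorphic_map_openness[OF h Mt] M(1) by simp
  ultimately show "\<exists>N'. openin T' N' \<and> h x \<in> N' \<and> T' interior_of (T' closure_of N') \<subseteq> N"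
    using M(2) by blast
qed

text \<open>A multiple of \<open>p\<close> in the interior has neighbours of every residue modulo \<open>p\<close>; as \<open>p > 2\<close>,
  one of them is neither \<open>0\<close> nor \<open>a mod p\<close>, which is impossible in the closure.\<close>
lemma interior_closure_arith_prog_odd:
  assumes ab: "kirch_basic a b" "odd b" and w: "w \<in> KT interior_of (KT closure_of arith_prog a b)"
  shows "w mod b = a mod b"
proof (rule mod_eq_squarefreeI)
  show "squarefree b" using ab(1) by (simp add: kirch_basic_def)
  fix p assume p: "prime p" "p dvd b"
  have "p \<noteq> 2" using p(2) ab(2) by auto
  then have "p > 2" using prime_ge_2_nat[OF p(1)] by simp
  define W where "W = KT interior_of (KT closure_of arith_prog a b)"
  have W: "openin KT W" "W \<subseteq> KT closure_of arith_prog a b"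
    unfolding W_def by (simp_all add: interior_of_subset)
  have res: "v mod p = a mod p" if "v \<in> W" "\<not> p dvd v" for v
  proof -
    have "\<And>y. y \<in> arith_prog a b \<Longrightarrow> y mod p = a mod p" using arith_prog_mod p(2) by blast
    then show ?thesis using closure_kirch_mod[OF _ p(1) that(2)] that(1) W(2) by blast
  qed
  show "w mod p = a mod p"
  proof (cases "p dvd w")
    case False
    then show ?thesis using res w by (simp add: W_def)
  next
    case True
    define t where "t = (if a mod p = 1 then 2 else 1::nat)"
    have t: "t \<noteq> a mod p" "0 < t" "t < p" unfolding t_def using \<open>p > 2\<close> by auto
    have "p \<notin> avoiding_primes W" using True w by (auto simp: avoiding_primes_def W_def)
    then obtain v where v: "v \<in> W" "v mod p = t mod p" using open_meets_residue[OF W(1) p(1)] by blast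
    then have "v mod p = t" using t(3) by simp
    then have "\<not> p dvd v" using t(2) by (simp add: dvd_eq_mod_eq_0)
    then show ?thesis using res[OF v(1)] \<open>v mod p = t\<close> t(1) by simp
  qed
qed

lemma even_semiregular:
  assumes x: "x \<ge> 1" "even x"
  shows "semiregular_at KT x"
  unfolding semiregular_at_def
proof (intro allI impI)
  fix N assume "openin KT N" "x \<in> N"
  then obtain d where d: "kirch_basic x d" "arith_prog x d \<subseteq> N" using openin_kirchE by blast
  have "odd d"
  proof
    assume "even d"
    moreover have "coprime x d" using d(1) by (simp add: kirch_basic_def)
    ultimately show False using x(2) coprime_common_divisor_nat[of x d 2] by simp
  qed
  \<comment> \<open>With \<open>P > x\<close>, the point \<open>x\<close> is the least element of its class modulo \<open>E\<close>.\<close>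
  obtain P where P: "prime P" "x + d < P" using bigger_prime by blast
  have "\<not> P dvd x"
  proof
    assume "P dvd x"
    then have "P \<le> x" using x(1) by (simp add: dvd_imp_le)
    then show False using P(2) by simp
  qed
  then have "kirch_basic x P" using kirch_basic_prime[OF P(1)] x(1) by blast
  define E where "E = lcm d P"
  have E: "kirch_basic x E" unfolding E_def using d(1) \<open>kirch_basic x P\<close> by (rule kirch_basic_lcm)
  have "P \<noteq> 2" using P(2) kirch_basic_pos[OF d(1)] x(1) by auto
  then have "odd P" using prime_odd_nat[OF P(1)] prime_ge_2_nat[OF P(1)] by simp
  then have "odd (d * P)" using \<open>odd d\<close> by simp
  moreover have "E dvd d * P" unfolding E_def by (simp add: lcm_least)
  ultimately have "odd E" by (meson dvd_trans)
  have "P \<le> E" unfolding E_def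
    by (rule dvd_imp_le) (simp_all add: lcm_pos_nat kirch_basic_pos[OF d(1)] prime_gt_0_nat[OF P(1)])
  then have "x < E" using P(2) by simp
  have "KT interior_of (KT closure_of arith_prog x E) \<subseteq> arith_prog x E"
  proof
    fix w assume "w \<in> KT interior_of (KT closure_of arith_prog x E)"
    then have "w mod E = x" using interior_closure_arith_prog_odd[OF E \<open>odd E\<close>] \<open>x < E\<close> by simp
    then show "w \<in> arith_prog x E" using \<open>x < E\<close> arith_prog_residue_iff by simp
  qed
  moreover have "arith_prog x E \<subseteq> N"
    using arith_prog_subset[of d E x x] d(2) unfolding E_def by auto
  ultimately show "\<exists>N'. openin KT N' \<and> x \<in> N' \<and> KT interior_of (KT closure_of N') \<subseteq> N"
    using openin_kirch_arith_prog[OF E] arith_prog_start by blast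
qed

lemma arith_prog_odd_part_in_closure:
  assumes d: "kirch_basic x d" and "odd x" "D dvd d" "d dvd 2 * D"
  shows "arith_prog (x + D) D \<subseteq> KT closure_of arith_prog x d"
proof
  fix v assume v: "v \<in> arith_prog (x + D) D"
  have "v \<ge> 1" using arith_prog_ge[OF v] d by (simp add: kirch_basic_def)
  show "v \<in> KT closure_of arith_prog x d"
  proof (rule in_closure_arith_prog[OF d \<open>v \<ge> 1\<close>])
    fix p assume p: "prime p" "p dvd d" "\<not> p dvd v"
    show "v mod p = x mod p"
    proof (cases "p = 2")
      case True
      then show ?thesis using p(3) \<open>odd x\<close> by (simp add: odd_iff_mod_2_eq_one)
    next
      case False
      have "p dvd 2 * D" using p(2) assms(4) by (rule dvd_trans)
      moreover have "\<not> p dvd 2" using False p(1) primes_dvd_imp_eq two_is_prime_nat by blast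
      ultimately have "p dvd D" using p(1) prime_dvd_mult_iff by blast
      have "v mod p = (x + D) mod p" using arith_prog_mod[OF v \<open>p dvd D\<close>] .
      also have "\<dots> = x mod p" using \<open>p dvd D\<close> by (simp add: mod_add_right_eq[symmetric])
      finally show ?thesis .
    qed
  qed
qed

lemma squarefree_odd_part:
  fixes d :: nat
  assumes "squarefree d"
  obtains D where "odd D" "D dvd d" "d dvd 2 * D"
proof (cases "even d")
  case True
  then obtain D where dD: "d = 2 * D" by (rule evenE)
  have "odd D"
  proof
    assume "even D"
    then obtain k where "D = 2 * k" by (rule evenE)
    then have "2 ^ 2 dvd d" using dD by simp
    then show False using squarefreeD[OF assms, of 2] by simp
  qed
  then show ?thesis using that dD by simp
next
  case False
  then show ?thesis using that by simp
qed

lemma kirch_basic_shift_divisor: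
  assumes "kirch_basic x d" "D dvd d"
  shows "kirch_basic (x + D) D"
proof -
  have "D > 0" using assms kirch_basic_pos by (metis dvd_0_left_iff gr0I not_gr0)
  moreover have "coprime x D"
    using coprime_divisors[OF dvd_refl assms(2)] assms(1) by (simp add: kirch_basic_def)
  then have "coprime (x + D) D" by (simp add: coprime_iff_gcd_eq_1 gcd_add1)
  moreover have "squarefree D" using squarefree_mono[OF assms(2)] assms(1) by (simp add: kirch_basic_def)
  ultimately show ?thesis using assms(1) by (simp add: kirch_basic_def Suc_le_eq)
qed

lemma odd_not_semiregular:
  assumes x: "x \<ge> 1" "odd x"
  shows "\<not> semiregular_at KT x"
proof
  assume sr: "semiregular_at KT x"
  have "kirch_basic x 2" using kirch_basic_prime[OF two_is_prime_nat] x by blast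
  then have "openin KT (arith_prog x 2)" by (rule openin_kirch_arith_prog)
  then have "\<exists>M. openin KT M \<and> x \<in> M \<and> KT interior_of (KT closure_of M) \<subseteq> arith_prog x 2"
    using sr arith_prog_start unfolding semiregular_at_def by simp
  then obtain M where M: "openin KT M" "x \<in> M" "KT interior_of (KT closure_of M) \<subseteq> arith_prog x 2"
    by blast
  obtain d where d: "kirch_basic x d" "arith_prog x d \<subseteq> M" using openin_kirchE[OF M(1,2)] by blast
  \<comment> \<open>Dropping the factor 2 of the modulus reaches the even number \<open>x + D\<close>.\<close>
  obtain D where D: "odd D" "D dvd d" "d dvd 2 * D"
    using squarefree_odd_part d(1) by (auto simp: kirch_basic_def)
  have "arith_prog (x + D) D \<subseteq> KT closure_of M"
    using arith_prog_odd_part_in_closure[OF d(1) x(2) D(2,3)] closure_of_mono[OF d(2)] by blast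
  then have "arith_prog (x + D) D \<subseteq> KT interior_of (KT closure_of M)"
    using openin_kirch_arith_prog[OF kirch_basic_shift_divisor[OF d(1) D(2)]]
    by (rule interior_of_maximal)
  then have "x + D \<in> arith_prog x 2" using M(3) arith_prog_start by blast
  then have "(x + D) mod 2 = x mod 2" by (simp add: arith_prog_iff)
  then show False using D(1) x(2) by presburger
qed

lemma semiregular_at_kirch_iff: "x \<ge> 1 \<Longrightarrow> semiregular_at KT x \<longleftrightarrow> even x"
  using even_semiregular odd_not_semiregular by blast

lemma homeomorphism_even_iff:
  assumes h: "homeomorphic_map KT KT h" and x: "x \<ge> 1"
  shows "even (h x) \<longleftrightarrow> even x"
proof -
  obtain g where hg: "homeomorphic_maps KT KT h g" using h homeomorphic_map_maps by blast
  then have g: "homeomorphic_map KT KT g" using homeomorphic_maps_sym homeomorphic_maps_imp_map by blast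
  have "g (h x) = x" using hg x by (simp add: homeomorphic_maps_def topspace_kirch)
  moreover have "h x \<ge> 1" using homeomorphism_kirch_ge1[OF h x] .
  ultimately have "semiregular_at KT (h x) \<longleftrightarrow> semiregular_at KT x"
    using semiregular_at_homeomorphic_image[OF h, of x] semiregular_at_homeomorphic_image[OF g, of "h x"]
      x by (auto simp: topspace_kirch)
  then show ?thesis using semiregular_at_kirch_iff x \<open>h x \<ge> 1\<close> by simp
qed

section \<open>Homeomorphisms respect divisibility and congruences modulo primes\<close>

lemma homeomorphism_odd_prime_dvd:
  assumes h: "homeomorphic_map KT KT h" and q: "prime q" "q > 2" and x: "x \<ge> 1" "q dvd x"
  shows "q dvd h x"
proof (rule ccontr)
  assume "\<not> q dvd h x"
  obtain \<sigma> where \<sigma>: "bij_betw \<sigma> {1..<q} {1..<q}"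
    and h\<sigma>: "\<And>j. j \<in> {1..<q} \<Longrightarrow> h ` arith_prog j q = arith_prog (\<sigma> j) q"
    using homeomorphism_permutes_residue_classes[OF h q] by blast
  have "h x mod q \<in> \<sigma> ` {1..<q}"
    using residue_in_units[OF q(1) \<open>\<not> q dvd h x\<close>] bij_betw_imp_surj_on[OF \<sigma>] by simp
  then obtain j where j: "j \<in> {1..<q}" "h x mod q = \<sigma> j" by blast
  then have "h x \<in> h ` arith_prog j q"
    using h\<sigma>[OF j(1)] bij_betw_apply[OF \<sigma> j(1)] arith_prog_residue_iff by simp
  then obtain y where y: "h x = h y" "y \<in> arith_prog j q" by (rule imageE)
  have "y \<ge> 1" using arith_prog_ge[OF y(2)] j(1) by simp
  then have "x = y"
    using inj_onD[OF homeomorphic_imp_injective_map[OF h] y(1)] x(1) by (simp add: topspace_kirch)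
  then have "x mod q = j" using y(2) j(1) arith_prog_residue_iff by simp
  then show False using j(1) x(2) by (simp add: dvd_eq_mod_eq_0)
qed

lemma homeomorphism_residue_map:
  assumes h: "homeomorphic_map KT KT h" and q: "prime q"
  obtains \<tau> where "inj_on \<tau> {..<q}" "\<tau> 0 = 0" "\<And>x. x \<ge> 1 \<Longrightarrow> h x mod q = \<tau> (x mod q)"
proof (cases "q = 2")
  case True
  have "h x mod 2 = x mod 2" if "x \<ge> 1" for x
    using homeomorphism_even_iff[OF h that] by (cases "even x") (simp_all add: odd_iff_mod_2_eq_one)
  then show ?thesis using that[of id] True by simp
next
  case False
  then have "q > 2" using prime_ge_2_nat[OF q] by simp
  obtain \<sigma> where \<sigma>: "bij_betw \<sigma> {1..<q} {1..<q}"
    and h\<sigma>: "\<And>j. j \<in> {1..<q} \<Longrightarrow> h ` arith_prog j q = arith_prog (\<sigma> j) q"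
    using homeomorphism_permutes_residue_classes[OF h q \<open>q > 2\<close>] by blast
  have unit: "h x mod q = \<sigma> (x mod q)" if "\<not> q dvd x" for x
  proof -
    note res = residue_in_units[OF q that]
    have "x \<in> arith_prog (x mod q) q" using res by (simp add: arith_prog_iff)
    then have "h x \<in> arith_prog (\<sigma> (x mod q)) q" using h\<sigma>[OF res] by blast
    then show ?thesis using bij_betw_apply[OF \<sigma> res] arith_prog_residue_iff by simp
  qed
  define \<tau> where "\<tau> k = (if k = 0 then 0 else \<sigma> k)" for k
  have "inj_on \<tau> {..<q}"
  proof (rule inj_onI)
    fix k l assume kl: "k \<in> {..<q}" "l \<in> {..<q}" and eq: "\<tau> k = \<tau> l"
    have nz: "\<sigma> m \<noteq> 0" if "m \<in> {1..<q}" for m using bij_betw_apply[OF \<sigma> that] by simp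
    show "k = l"
    proof (cases "k = 0 \<or> l = 0")
      case True
      then show ?thesis using eq nz[of k] nz[of l] kl by (auto simp: \<tau>_def split: if_splits)
    next
      case False
      then show ?thesis
        using eq kl inj_onD[OF bij_betw_imp_inj_on[OF \<sigma>], of k l] by (simp add: \<tau>_def)
    qed
  qed
  moreover have "h x mod q = \<tau> (x mod q)" if "x \<ge> 1" for x
    using unit homeomorphism_odd_prime_dvd[OF h q \<open>q > 2\<close> that]
    by (cases "q dvd x") (simp_all add: \<tau>_def dvd_eq_mod_eq_0)
  ultimately show ?thesis using that[of \<tau>] by (simp add: \<tau>_def)
qed

lemma homeomorphism_mod_prime_eq_iff:
  assumes "homeomorphic_map KT KT h" "prime q" "x \<ge> 1" "y \<ge> 1"
  shows "h x mod q = h y mod q \<longleftrightarrow> x mod q = y mod q"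
proof -
  obtain \<tau> where "inj_on \<tau> {..<q}" "\<And>x. x \<ge> 1 \<Longrightarrow> h x mod q = \<tau> (x mod q)"
    using homeomorphism_residue_map[OF assms(1,2)] by blast
  then show ?thesis using assms(2-4) prime_gt_0_nat[OF assms(2)] by (simp add: inj_on_eq_iff)
qed

lemma homeomorphism_prime_dvd_iff:
  assumes "homeomorphic_map KT KT h" "prime q" "x \<ge> 1"
  shows "q dvd h x \<longleftrightarrow> q dvd x"
proof -
  obtain \<tau> where "inj_on \<tau> {..<q}" "\<tau> 0 = 0" "\<And>x. x \<ge> 1 \<Longrightarrow> h x mod q = \<tau> (x mod q)"
    using homeomorphism_residue_map[OF assms(1,2)] by blast
  moreover have "x mod q \<in> {..<q}" "0 \<in> {..<q}" using prime_gt_0_nat[OF assms(2)] by simp_all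
  ultimately have "h x mod q = 0 \<longleftrightarrow> x mod q = 0" using assms(3) by (metis inj_on_eq_iff)
  then show ?thesis by (simp add: dvd_eq_mod_eq_0)
qed

section \<open>Prime powers next to powers of two\<close>

lemma odd_dvd_power_of_two:
  fixes b :: int
  assumes "odd b" "b dvd 2 ^ k"
  shows "\<bar>b\<bar> = 1"
proof -
  have "coprime b (2 ^ k)" using assms(1) by simp
  then show ?thesis using coprime_common_divisor_int[OF _ dvd_refl assms(2)] by blast
qed

lemma odd_geometric_sum_parity:
  fixes x :: int
  assumes "odd x"
  shows "odd (\<Sum>i<m. x ^ i) \<longleftrightarrow> odd m"
  by (induction m) (simp_all add: assms)

lemma odd_power_minus_one_power_of_two:
  fixes x :: int
  assumes "odd x" "\<bar>x\<bar> > 1" "odd m" "\<bar>x ^ m - 1\<bar> = 2 ^ k"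
  shows "m = 1"
proof (rule ccontr)
  assume "m \<noteq> 1"
  then have "m \<ge> 3" using assms(3) by presburger
  define S where "S = (\<Sum>i<m. x ^ i)"
  have diff: "x ^ m - 1 = (x - 1) * S" unfolding S_def by (rule power_diff_1_eq)
  then have "S dvd 2 ^ k" using assms(4) by (metis dvd_abs_iff dvd_triv_right)
  moreover have "odd S" unfolding S_def using odd_geometric_sum_parity[OF assms(1)] assms(3) by simp
  ultimately have "\<bar>S\<bar> = 1" by (rule odd_dvd_power_of_two[rotated])
  then have "\<bar>x ^ m - 1\<bar> \<le> \<bar>x\<bar> + 1" using diff by (simp add: abs_mult)
  moreover have "\<bar>x\<bar> ^ m - 1 \<le> \<bar>x ^ m - 1\<bar>"
    using abs_triangle_ineq2[of "x ^ m" 1] by (simp add: power_abs)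
  moreover have "\<bar>x\<bar> ^ 3 \<le> \<bar>x\<bar> ^ m" using \<open>m \<ge> 3\<close> assms(2) by (simp add: power_increasing)
  moreover have "4 * \<bar>x\<bar> \<le> \<bar>x\<bar> ^ 3"
  proof -
    have "2 * 2 \<le> \<bar>x\<bar> * \<bar>x\<bar>" using assms(2) by (intro mult_mono) auto
    then have "4 * \<bar>x\<bar> \<le> (\<bar>x\<bar> * \<bar>x\<bar>) * \<bar>x\<bar>" by (intro mult_right_mono) auto
    then show ?thesis by (simp add: power3_eq_cube)
  qed
  ultimately show False using assms(2) by linarith
qed

lemma power_of_two_mod_4:
  assumes "j \<ge> 2"
  shows "(2::nat) ^ j mod 4 = 0"
proof -
  obtain i where "j = i + 2" using assms by (metis le_add_diff_inverse2)
  then show ?thesis by (simp add: power_add)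
qed

lemma odd_square_eq_power_of_two_plus_one:
  fixes q k :: nat
  assumes "odd q" "q > 1" "q ^ 2 = 2 ^ k + 1"
  shows "q = 3 \<and> k = 3"
proof -
  obtain r where r: "q = 2 * r + 1" using assms(1) by (rule oddE)
  have "(2 * r) * (2 * r + 2) = 2 ^ k" using assms(3) r by (simp add: power2_eq_square algebra_simps)
  then obtain a b where a: "2 * r = 2 ^ a" and b: "2 * r + 2 = 2 ^ b"
    using divides_primepow_nat[OF two_is_prime_nat] by (metis dvd_triv_left dvd_triv_right)
  have "a = 1"
  proof (rule ccontr)
    assume "a \<noteq> 1"
    moreover have "a \<noteq> 0"
    proof
      assume "a = 0"
      then have "2 * r = 1" using a by simp
      then show False by presburger
    qed
    ultimately have "a \<ge> 2" by simp
    moreover have "(2::nat) ^ a < 2 ^ b" using a b by linarith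
    then have "a < b" by (rule power_less_imp_less_exp[rotated]) simp
    ultimately have "(2 * r) mod 4 = 0" "(2 * r + 2) mod 4 = 0"
      using a b power_of_two_mod_4 by simp_all
    then show False by presburger
  qed
  then have "q = 3" using a r by simp
  then have "(2::nat) ^ k = 2 ^ 3" using assms(3) by simp
  then have "k = 3" by (rule power_inject_exp[THEN iffD1, rotated]) simp
  then show ?thesis using \<open>q = 3\<close> by simp
qed

lemma odd_square_plus_one_ne_power_of_two:
  fixes q k :: nat
  assumes "odd q" "q > 1"
  shows "q ^ 2 + 1 \<noteq> 2 ^ k"
proof
  assume eq: "q ^ 2 + 1 = 2 ^ k"
  obtain r where r: "q = 2 * r + 1" using assms(1) by (rule oddE)
  then have sq: "q ^ 2 + 1 = 4 * (r * r + r) + 2" by (simp add: power2_eq_square algebra_simps)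
  have "k \<ge> 2"
  proof (rule ccontr)
    assume "\<not> k \<ge> 2"
    then have "(2::nat) ^ k \<le> 2 ^ 1" by (intro power_increasing) simp_all
    then show False using eq sq r assms(2) by simp
  qed
  then have "(q ^ 2 + 1) mod 4 = 0" using eq power_of_two_mod_4 by simp
  then show False using sq by presburger
qed

lemma odd_square_adjacent_power_of_two:
  fixes q k :: nat
  assumes "odd q" "q > 1" "\<bar>int (q ^ 2) - 2 ^ k\<bar> = 1"
  shows "q = 3 \<and> k = 3"
proof -
  have "int (q ^ 2) = int (2 ^ k + 1) \<or> int (q ^ 2 + 1) = int (2 ^ k)" using assms(3) by simp linarith
  then show ?thesis
    using odd_square_eq_power_of_two_plus_one[OF assms(1,2)]
      odd_square_plus_one_ne_power_of_two[OF assms(1,2)] unfolding of_nat_eq_iff by blast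
qed

text \<open>The case of Catalan's equation needed here: among odd prime powers \<open>p\<^sup>m\<close> with \<open>m \<ge> 2\<close>, only
  \<open>3\<^sup>2\<close> is next to a power of two.\<close>
lemma prime_power_adjacent_power_of_two:
  fixes p m k :: nat
  assumes p: "prime p" "odd p" and "m \<ge> 1" and adj: "\<bar>int (p ^ m) - 2 ^ k\<bar> = 1"
  shows "m = 1 \<or> (p = 3 \<and> m = 2 \<and> k = 3)"
proof (cases "even m")
  case True
  then obtain t where t: "m = 2 * t" by (rule evenE)
  have "p ^ t > 1" using one_less_power[OF prime_gt_1_nat[OF p(1)]] t \<open>m \<ge> 1\<close> by simp
  moreover have "p ^ m = (p ^ t) ^ 2" using t by (simp add: power_mult mult.commute)
  ultimately have "p ^ t = 3" "k = 3"
    using odd_square_adjacent_power_of_two[of "p ^ t" k] p(2) adj by simp_all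
  moreover have "t = 1"
  proof (rule ccontr)
    assume "t \<noteq> 1"
    then have "p ^ 2 \<le> p ^ t" using t \<open>m \<ge> 1\<close> prime_gt_0_nat[OF p(1)] by (intro power_increasing) auto
    moreover have "2 ^ 2 \<le> p ^ 2" using prime_ge_2_nat[OF p(1)] by (rule power_mono) simp
    ultimately show False using \<open>p ^ t = 3\<close> by simp
  qed
  ultimately show ?thesis using t by simp
next
  case False
  have "\<bar>int p\<bar> > 1" using prime_gt_1_nat[OF p(1)] by simp
  have "(- int p) ^ m = - (int p ^ m)" using False by (simp add: power_minus_odd)
  moreover have "\<bar>P - 1\<bar> = K \<or> \<bar>- P - 1\<bar> = K" if "\<bar>P - K\<bar> = 1" "P \<ge> 0" "K > 0" for P K :: int
    using that by arith
  moreover have "\<bar>int p ^ m - 2 ^ k\<bar> = 1" using adj by simp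
  ultimately have "\<bar>int p ^ m - 1\<bar> = 2 ^ k \<or> \<bar>(- int p) ^ m - 1\<bar> = 2 ^ k"
    by (metis zero_le_power of_nat_0_le_iff zero_less_power zero_less_numeral)
  then consider "\<bar>int p ^ m - 1\<bar> = 2 ^ k" | "\<bar>(- int p) ^ m - 1\<bar> = 2 ^ k" by blast
  then show ?thesis
    using odd_power_minus_one_power_of_two[of "int p" m k] odd_power_minus_one_power_of_two[of "- int p" m k]
      p(2) False \<open>\<bar>int p\<bar> > 1\<close> by cases simp_all
qed

section \<open>Images of prime powers\<close>

lemma eq_prime_power_if_prime_divisors:
  fixes y p :: nat
  assumes "y \<ge> 1" "prime p" "\<And>s. prime s \<Longrightarrow> s dvd y \<longleftrightarrow> s = p"
  shows "\<exists>m\<ge>1. y = p ^ m"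
proof -
  have "prime_factors y = {p}" using assms by (auto simp: in_prime_factors_iff)
  then have "y = p ^ multiplicity p y" using prod_prime_factors[of y] assms(1) by simp
  moreover have "multiplicity p y \<ge> 1"
    using prime_multiplicity_gt_zero_iff[of p y] assms by simp
  ultimately show ?thesis by blast
qed

lemma homeomorphism_prime_power:
  assumes h: "homeomorphic_map KT KT h" and p: "prime p" and "n \<ge> 1"
  obtains m where "m \<ge> 1" "h (p ^ n) = p ^ m"
proof -
  have pn: "p ^ n \<ge> 1" using p by (simp add: prime_gt_0_nat Suc_le_eq)
  have "s dvd h (p ^ n) \<longleftrightarrow> s = p" if "prime s" for s
    using homeomorphism_prime_dvd_iff[OF h that pn] prime_dvd_power_iff[OF that] \<open>n \<ge> 1\<close>
      primes_dvd_imp_eq[OF that p] by auto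
  then show ?thesis
    using eq_prime_power_if_prime_divisors[OF homeomorphism_kirch_ge1[OF h pn] p] that by blast
qed

lemma homeomorphism_image_prime_powers:
  assumes h: "homeomorphic_map KT KT h" and p: "prime p"
  shows "h ` {p ^ n | n. n \<ge> 1} = {p ^ n | n. n \<ge> 1}"
proof
  show "h ` {p ^ n | n. n \<ge> 1} \<subseteq> {p ^ n | n. n \<ge> 1}"
    using homeomorphism_prime_power[OF h p] by blast
  obtain g where hg: "homeomorphic_maps KT KT h g" using h homeomorphic_map_maps by blast
  then have g: "homeomorphic_map KT KT g" using homeomorphic_maps_sym homeomorphic_maps_imp_map by blast
  show "{p ^ n | n. n \<ge> 1} \<subseteq> h ` {p ^ n | n. n \<ge> 1}"
  proof clarify
    fix n :: nat assume "n \<ge> 1"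
    obtain m where m: "m \<ge> 1" "g (p ^ n) = p ^ m" using homeomorphism_prime_power[OF g p \<open>n \<ge> 1\<close>] .
    have "h (g (p ^ n)) = p ^ n" using hg p by (simp add: homeomorphic_maps_def topspace_kirch prime_gt_0_nat Suc_le_eq)
    then show "p ^ n \<in> h ` {p ^ n | n. n \<ge> 1}" using m by (metis (mono_tags, lifting) image_eqI mem_Collect_eq)
  qed
qed

lemma homeomorphism_adjacent:
  assumes h: "homeomorphic_map KT KT h" and "x \<ge> 1" "y \<ge> 1" and adj: "\<bar>int x - int y\<bar> = 1"
  shows "\<bar>int (h x) - int (h y)\<bar> = 1"
proof (rule ccontr)
  assume "\<bar>int (h x) - int (h y)\<bar> \<noteq> 1"
  then have "nat \<bar>int (h x) - int (h y)\<bar> \<noteq> 1" by simp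
  then obtain s where s: "prime s" "s dvd nat \<bar>int (h x) - int (h y)\<bar>" using prime_factor_nat by blast
  then have "h x mod s = h y mod s" using mod_eq_iff_dvd_symdiff_nat by blast
  then have "x mod s = y mod s" using homeomorphism_mod_prime_eq_iff[OF h s(1) assms(2,3)] by simp
  then have "s dvd nat \<bar>int x - int y\<bar>" using mod_eq_iff_dvd_symdiff_nat by blast
  then show False using adj s(1) by simp
qed

lemma homeomorphism_fixes_prime_adjacent_power_of_two:
  assumes h: "homeomorphic_map KT KT h" and p: "prime p" "odd p"
    and "n \<ge> 1" and adj: "\<bar>int p - 2 ^ n\<bar> = 1"
  shows "h p = p"
proof -
  obtain m where m: "m \<ge> 1" "h p = p ^ m" using homeomorphism_prime_power[OF h p(1), of 1] by auto
  have p1: "p \<ge> 1" using prime_gt_0_nat[OF p(1)] by simp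
  have power_image: "\<exists>k. h (2 ^ j) = 2 ^ k \<and> \<bar>int (p ^ m) - 2 ^ k\<bar> = 1"
    if j: "j \<ge> 1" "\<bar>int p - 2 ^ j\<bar> = 1" for j
  proof -
    obtain k where "h (2 ^ j) = 2 ^ k" using homeomorphism_prime_power[OF h two_is_prime_nat j(1)] by blast
    moreover have "\<bar>int (h p) - int (h (2 ^ j))\<bar> = 1"
      using homeomorphism_adjacent[OF h p1, of "2 ^ j"] j(2) by simp
    ultimately show ?thesis using m(2) by auto
  qed
  obtain k where "\<bar>int (p ^ m) - 2 ^ k\<bar> = 1" using power_image[OF \<open>n \<ge> 1\<close> adj] by blast
  then consider "m = 1" | "p = 3" "m = 2"
    using prime_power_adjacent_power_of_two[OF p m(1)] by blast
  then show ?thesis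
  proof cases
    case 1
    then show ?thesis using m(2) by simp
  next
    case 2
    \<comment> \<open>Both \<open>2\<close> and \<open>4\<close> are next to \<open>p = 3\<close>, so both would be mapped to \<open>8\<close>.\<close>
    have eight: "h (2 ^ j) = 8" if j: "j \<in> {1, 2}" for j
    proof -
      have "j \<ge> 1" "\<bar>int p - 2 ^ j\<bar> = 1" using j 2(1) by auto
      then obtain k where k: "h (2 ^ j) = 2 ^ k" "\<bar>int (p ^ m) - 2 ^ k\<bar> = 1"
        using power_image by blast
      then have "k = 3" using prime_power_adjacent_power_of_two[OF p m(1) k(2)] 2 by simp
      then show ?thesis using k(1) by simp
    qed
    have "h 2 = h 4" using eight[of 1] eight[of 2] by simp
    then show ?thesis
      using inj_onD[OF homeomorphic_imp_injective_map[OF h], of 2 4] by (simp add: topspace_kirch)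
  qed
qed

lemma fermat_or_mersenne_adjacent_power_of_two:
  assumes "fermat_prime p \<or> mersenne_prime p"
  obtains n where "n \<ge> 1" "\<bar>int p - 2 ^ n\<bar> = 1"
proof -
  obtain n where n: "n \<ge> 1" "p = 2 ^ n + 1 \<or> p = 2 ^ n - 1"
    using assms unfolding fermat_prime_def mersenne_prime_def by blast
  moreover have "int (2 ^ n - 1) = 2 ^ n - 1" using one_le_power[of "2::nat" n] by (simp add: of_nat_diff)
  ultimately have "\<bar>int p - 2 ^ n\<bar> = 1" by auto
  then show ?thesis using that n(1) by blast
qed

theorem lemma3p19:
  fixes p :: nat and h :: "nat \<Rightarrow> nat"
  assumes "prime p" and "odd p"
    and "homeomorphic_map kirch_topology kirch_topology h"
  shows "(fermat_prime p \<or> mersenne_prime p \<longrightarrow> h p = p)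
    \<and> (\<not> fermat_prime p \<and> \<not> mersenne_prime p \<longrightarrow>
         h ` {p ^ n | n. n \<ge> 1} = {p ^ n | n. n \<ge> 1})"
proof (intro conjI impI)
  assume "fermat_prime p \<or> mersenne_prime p"
  then obtain n where "n \<ge> 1" "\<bar>int p - 2 ^ n\<bar> = 1"
    by (rule fermat_or_mersenne_adjacent_power_of_two)
  then show "h p = p" by (rule homeomorphism_fixes_prime_adjacent_power_of_two[OF assms(3,1,2)])
next
  show "h ` {p ^ n | n. n \<ge> 1} = {p ^ n | n. n \<ge> 1}"
    using assms(3,1) by (rule homeomorphism_image_prime_powers)
qed

end
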